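(* Let $S$ be a nonnegative half-integer with $N_o=2S+1$, let $0\le N_e\le N_o$, let $\hat c_j,\hat c_j^\dagger$ ($j=0,\dots,2S$) be fermionic operators obeying the canonical anticommutation relations, and let $\mathcal H_{N_e,N_o}$ be the span of all Slater determinants $\hat c^\dagger_{k_1}\cdots\hat c^\dagger_{k_{N_e}}|vac\rangle$, $0\le k_1<\cdots<k_{N_e}\le 2S$. For integers $m,n\ge 0$ define $$\hat{\mathcal L}_{m,n}=\sum_{j=0}^{2S}A_{m,n}(j)\,\hat c^\dagger_{j+m-n}\hat c_j,\qquad A_{m,n}(j)=\begin{cases}\sqrt{\frac{j!}{(j-n)!}}\sqrt{\frac{(j-n+m)!}{(j-n)!}},& j\ge n,\\ 0,& j<n,\end{cases}$$ with terms having $j+m-n\notin\{0,\dots,2S\}$ omitted. Fix a nonzero $|\phi\rangle\in\mathcal H_{N_e,N_o}$. Then $$\mathrm{span}\Big\{\prod_{t=1}^{N_{\max}}\hat{\mathcal L}_{m_t,n_t}|\phi\rangle\ \Big|\ 0\le N_{\max}\le N_e,\ m_t,n_t\ge0\Big\}=\mathcal H_{N_e,N_o}.$$ Consequently, for any normalized state $|\psi_0\rangle\in\mathcal H_{N_e,N_o}$ (ground state) or any subspace $\mathcal G\subset\mathcal H_{N_e,N_o}$ spanned by ground states, every state $|\psi\rangle\in\mathcal G^\perp$ (a neutral excitation) is a finite linear combination of states of the form $\prod_{t=1}^{N_{\max}}\hat{\mathcal L}_{m_t,n_t}|\psi_0\rangle$ with $|\psi_0\rangle$ a ground state.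
   Context: $|vac\rangle$ is the fermionic vacuum; the empty product is the identity. $\hat{\mathcal L}_{m,n}$ is the orbital-truncated second-quantized form on the disk of $\sum_i(\hat b_i^\dagger)^m\hat b_i^n$, with $\hat b,\hat b^\dagger$ single-particle guiding-center ladder operators ($[\hat b,\hat b^\dagger]=1$) and orbital $j$ the state $(\hat b^\dagger)^j|0\rangle/\sqrt{j!}$. A neutral gapped excitation relative to a ground-state subspace $\mathcal G$ is any $|\psi\rangle\in\mathcal H_{N_e,N_o}$ orthogonal to $\mathcal G$. *)

theory Defs
  imports Complex_Main
begin

text \<open>A many-body state with orbitals 0..No-1 is represented by its
coefficients in the Slater-determinant basis: a function from finite sets of occupied
orbitals K to complex amplitudes. The basis vector for K = {k1 < ... < kN} is
c_{k1}^dagger ... c_{kN}^dagger |vac>.\<close>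

type_synonym fstate = "nat set \<Rightarrow> complex"

definition slaters :: "nat \<Rightarrow> nat \<Rightarrow> nat set set" where
  "slaters Ne No = {K. K \<subseteq> {..<No} \<and> card K = Ne}"

definition Hspace :: "nat \<Rightarrow> nat \<Rightarrow> fstate set" where
  "Hspace Ne No = {v. \<forall>K. v K \<noteq> 0 \<longrightarrow> K \<in> slaters Ne No}"

definition cspan :: "fstate set \<Rightarrow> fstate set" where
  "cspan X = {v. \<exists>B c. finite B \<and> B \<subseteq> X \<and> v = (\<lambda>K. \<Sum>b\<in>B. c b * b K)}"

definition ket :: "nat set \<Rightarrow> fstate" where
  "ket K = (\<lambda>K'. if K' = K then 1 else 0)"

text \<open>c_j |K> = (-1)^{#{k in K. k<j}} |K - {j}> if j in K, else 0 (CAR ordering convention).\<close>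
definition ann_sign :: "nat \<Rightarrow> nat set \<Rightarrow> complex" where
  "ann_sign j K = (-1) ^ card {k\<in>K. k < j}"

text \<open>c_a^dagger c_j applied to the basis vector |K>.\<close>
definition hop_ket :: "nat \<Rightarrow> nat \<Rightarrow> nat set \<Rightarrow> fstate" where
  "hop_ket a j K =
     (if j \<in> K \<and> a \<notin> K - {j}
      then (\<lambda>K'. ann_sign j K * ann_sign a (K - {j}) * ket (insert a (K - {j})) K')
      else (\<lambda>_. 0))"

text \<open>c_a^dagger c_j extended linearly to states supported on finite sets of orbitals
below No (the states considered always have finite support).\<close>
definition hop :: "nat \<Rightarrow> nat \<Rightarrow> nat \<Rightarrow> fstate \<Rightarrow> fstate" where
  "hop No a j v = (\<lambda>K'. \<Sum>K\<in>Pow {..<No}. v K * hop_ket a j K K')"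

definition Acoef :: "nat \<Rightarrow> nat \<Rightarrow> nat \<Rightarrow> real" where
  "Acoef m n j = (if n \<le> j
      then sqrt (fact j / fact (j - n)) * sqrt (fact (j - n + m) / fact (j - n))
      else 0)"

text \<open>L_{m,n} = sum_{j=0}^{No-1} A_{m,n}(j) c^dagger_{j+m-n} c_j, terms with j+m-n outside
{0..No-1} omitted (terms with j<n vanish since A_{m,n}(j)=0).\<close>
definition Lop :: "nat \<Rightarrow> nat \<Rightarrow> nat \<Rightarrow> fstate \<Rightarrow> fstate" where
  "Lop No m n v = (\<lambda>K'. \<Sum>j\<in>{j. j < No \<and> n \<le> j \<and> j - n + m < No}.
      complex_of_real (Acoef m n j) * hop No (j - n + m) j v K')"

text \<open>Product L_{m_1,n_1} ... L_{m_N,n_N} |phi> (rightmost factor applied first).\<close>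
definition Lprod :: "nat \<Rightarrow> (nat \<times> nat) list \<Rightarrow> fstate \<Rightarrow> fstate" where
  "Lprod No ms v = foldr (\<lambda>(m, n) f. Lop No m n \<circ> f) ms id v"

definition inner_f :: "nat \<Rightarrow> nat \<Rightarrow> fstate \<Rightarrow> fstate \<Rightarrow> complex" where
  "inner_f Ne No u v = (\<Sum>K\<in>slaters Ne No. cnj (u K) * v K)"

end

theory Submission
  imports Defs "HOL-Library.Function_Algebras"
begin

(* Every hop c_a^dagger c_j is a linear combination of the operators L_{m,n}: L_{a,j} contains
   c_a^dagger c_j with the positive coefficient A_{a,j}(j) and otherwise only hops
   c_{j'-j+a}^dagger c_{j'} with j' > j, so downward induction on j expresses all hops through
   the L's. It therefore suffices that products of N_e hops applied to phi span the whole space.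
   Pick a determinant K with phi(K) <> 0 and any target A. Pairing K with A by a bijection that
   fixes the common orbitals gives a product of N_e hops that sends |K> to a nonzero multiple of
   |A> and kills every other N_e-particle determinant, hence sends phi to a nonzero multiple
   of |A>. *)

definition fscale :: "complex \<Rightarrow> fstate \<Rightarrow> fstate" (infixr \<open>*\<^sub>F\<close> 75) where
  "c *\<^sub>F v = (\<lambda>K. c * v K)"

lemma fscale_apply: "(c *\<^sub>F v) K = c * v K"
  by (simp add: fscale_def)

interpretation fstate: module fscale
  by standard (simp_all add: fun_eq_iff fscale_apply algebra_simps)

lemma sum_fun_apply: "(\<Sum>a\<in>A. f a) x = (\<Sum>a\<in>A. f a x)"
  by (induction A rule: infinite_finite_induct) auto

lemma sum_fscale_eq: "(\<Sum>a\<in>A. r a *\<^sub>F a) = (\<lambda>K. \<Sum>a\<in>A. r a * a K)"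
  by (simp add: fun_eq_iff sum_fun_apply fscale_apply)

lemma cspan_eq_span: "cspan X = fstate.span X"
  unfolding cspan_def fstate.span_explicit sum_fscale_eq by blast

lemma hop_eq_sum: "hop No a j v = (\<Sum>K\<in>Pow {..<No}. v K *\<^sub>F hop_ket a j K)"
  by (simp add: hop_def fun_eq_iff sum_fun_apply fscale_apply)

lemma Lop_eq_sum:
  "Lop No m n v = (\<Sum>j | j < No \<and> n \<le> j \<and> j - n + m < No.
     complex_of_real (Acoef m n j) *\<^sub>F hop No (j - n + m) j v)"
  by (simp add: Lop_def fun_eq_iff sum_fun_apply fscale_apply)

lemma module_hom_hop: "module_hom fscale fscale (hop No a j)"
  unfolding module_hom_iff
  by (simp add: fstate.module_axioms hop_def fun_eq_iff fscale_apply distrib_right sum.distrib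
      sum_distrib_left mult.assoc)

lemma module_hom_Lop: "module_hom fscale fscale (Lop No m n)"
  unfolding module_hom_iff
  by (simp add: fstate.module_axioms Lop_def fun_eq_iff fscale_apply module_hom.add[OF module_hom_hop]
      module_hom.scale[OF module_hom_hop] distrib_left sum.distrib sum_distrib_left mult.left_commute)

fun hops :: "nat \<Rightarrow> (nat \<times> nat) list \<Rightarrow> fstate \<Rightarrow> fstate" where
  "hops No [] v = v"
| "hops No ((a, k) # ps) v = hop No a k (hops No ps v)"

lemma module_hom_hops: "module_hom fscale fscale (hops No ps)"
proof (induction ps)
  case Nil
  have "hops No [] = (\<lambda>v. v)"
    by (simp add: fun_eq_iff)
  then show ?case
    using fstate.module_hom_ident by (simp only:)
next
  case (Cons p ps)
  obtain a k where "p = (a, k)" by force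
  with module_hom_compose[OF Cons.IH module_hom_hop[of No a k]] show ?case
    by (simp add: comp_def)
qed

lemma Lprod_Nil [simp]: "Lprod No [] v = v"
  by (simp add: Lprod_def)

lemma Lprod_Cons [simp]: "Lprod No ((m, n) # ms) v = Lop No m n (Lprod No ms v)"
  by (simp add: Lprod_def)

lemma hop_mem_span_of_Lop:
  assumes Lop: "\<And>m n. Lop No m n w \<in> fstate.span X" and "a < No" "j < No"
  shows "hop No a j w \<in> fstate.span X"
  using assms(2,3)
proof (induction "No - j" arbitrary: a j rule: less_induct)
  case less
  define J where "J = {j'. j' < No \<and> j < j' \<and> j' - j + a < No}"
  \<comment> \<open>L_{a,j} is c_a^dagger c_j with coefficient c > 0 plus hops annihilating some j' > j\<close>
  define c where "c = complex_of_real (Acoef a j j)"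
  have "c \<noteq> 0"
    by (simp add: c_def Acoef_def)
  have "{j'. j' < No \<and> j \<le> j' \<and> j' - j + a < No} = insert j J"
    using less.prems by (auto simp: J_def)
  moreover have "finite J"
    by (rule finite_subset[of _ "{..<No}"]) (auto simp: J_def)
  ultimately have Lop_split: "Lop No a j w = c *\<^sub>F hop No a j w
      + (\<Sum>j'\<in>J. complex_of_real (Acoef a j j') *\<^sub>F hop No (j' - j + a) j' w)"
    by (simp add: Lop_eq_sum c_def J_def)
  have "(\<Sum>j'\<in>J. complex_of_real (Acoef a j j') *\<^sub>F hop No (j' - j + a) j' w) \<in> fstate.span X"
    using less by (intro fstate.span_sum fstate.span_scale less.hyps) (auto simp: J_def)
  then have "Lop No a j w - (\<Sum>j'\<in>J. complex_of_real (Acoef a j j') *\<^sub>F hop No (j' - j + a) j' w)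
      \<in> fstate.span X"
    by (intro fstate.span_diff Lop)
  then have "c *\<^sub>F hop No a j w \<in> fstate.span X"
    by (simp add: Lop_split)
  then have "inverse c *\<^sub>F c *\<^sub>F hop No a j w \<in> fstate.span X"
    by (rule fstate.span_scale)
  with \<open>c \<noteq> 0\<close> show ?case
    by simp
qed

lemma hops_mem_span_Lprod:
  assumes "\<forall>(a, k)\<in>set ps. a < No \<and> k < No"
  shows "hops No ps \<phi> \<in> fstate.span {Lprod No ms \<phi> | ms. length ms = length ps}"
  using assms
proof (induction ps)
  case Nil
  have "\<phi> = Lprod No [] \<phi>"
    by simp
  then show ?case
    by (intro fstate.span_base) auto
next
  case (Cons p ps)
  obtain a k where p: "p = (a, k)" by force
  let ?X = "{Lprod No ms \<phi> | ms. length ms = length ps}"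
  let ?Y = "{Lprod No ms \<phi> | ms. length ms = Suc (length ps)}"
  have w: "hops No ps \<phi> \<in> fstate.span ?X"
    using Cons by simp
  have "Lop No m n (hops No ps \<phi>) \<in> fstate.span ?Y" for m n
  proof -
    have "Lop No m n ` ?X \<subseteq> ?Y"
    proof
      fix v assume "v \<in> Lop No m n ` ?X"
      then obtain ms where "v = Lprod No ((m, n) # ms) \<phi>" "length ((m, n) # ms) = Suc (length ps)"
        by auto
      then show "v \<in> ?Y" by blast
    qed
    then have "fstate.span (Lop No m n ` ?X) \<subseteq> fstate.span ?Y"
      by (rule fstate.span_mono)
    moreover have "Lop No m n (hops No ps \<phi>) \<in> fstate.span (Lop No m n ` ?X)"
      using w by (simp add: module_hom.span_image[OF module_hom_Lop])
    ultimately show ?thesis by blast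
  qed
  then show ?case
    using Cons.prems by (auto simp: p intro: hop_mem_span_of_Lop)
qed

lemma hop_ket_eq_fscale:
  "hop_ket a k L = (if k \<in> L \<and> a \<notin> L - {k} then ann_sign k L * ann_sign a (L - {k}) else 0)
     *\<^sub>F ket (insert a (L - {k}))"
  by (auto simp: hop_ket_def fun_eq_iff fscale_apply)

lemma hop_on_ket: "L \<subseteq> {..<No} \<Longrightarrow> hop No a k (ket L) = hop_ket a k L"
  by (simp add: hop_eq_sum ket_def if_distrib[of "\<lambda>x. x *\<^sub>F _"] cong: if_cong)

text \<open>The head of the list acts last. Each created orbital is fresh and each annihilated
orbital was occupied from the start, so the product moves the orbitals in the second components
to those in the first (see hops_ket).\<close>

fun admissible_hops :: "nat \<Rightarrow> (nat \<times> nat) list \<Rightarrow> bool" where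
  "admissible_hops No [] \<longleftrightarrow> True"
| "admissible_hops No ((a, k) # ps) \<longleftrightarrow> a < No \<and> a \<notin> fst ` set ps
     \<and> k \<notin> fst ` set ps \<union> snd ` set ps \<and> admissible_hops No ps"

lemma admissible_hops_bound: "admissible_hops No ps \<Longrightarrow> fst ` set ps \<subseteq> {..<No}"
  by (induction ps rule: admissible_hops.induct) auto

lemma hops_ket:
  assumes "admissible_hops No ps" "L \<subseteq> {..<No}"
  shows "\<exists>s. hops No ps (ket L) = s *\<^sub>F ket (L - snd ` set ps \<union> fst ` set ps)
    \<and> (s \<noteq> 0 \<longleftrightarrow> snd ` set ps \<subseteq> L \<and> fst ` set ps \<inter> (L - snd ` set ps) = {})"
  using assms(1)
proof (induction ps)
  case Nil
  show ?case
    by (intro exI[of _ 1]) simp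
next
  case (Cons p ps)
  obtain a k where p: "p = (a, k)" by force
  let ?K = "snd ` set ps" and ?A = "fst ` set ps"
  define L' where "L' = L - ?K \<union> ?A"
  have adm: "admissible_hops No ps"
    using Cons.prems[unfolded p] by simp
  from Cons.IH[OF adm] obtain s where s: "hops No ps (ket L) = s *\<^sub>F ket L'"
      "s \<noteq> 0 \<longleftrightarrow> ?K \<subseteq> L \<and> ?A \<inter> (L - ?K) = {}"
    unfolding L'_def by blast
  have "?A \<subseteq> {..<No}"
    using adm by (rule admissible_hops_bound)
  with assms(2) have "L' \<subseteq> {..<No}"
    unfolding L'_def by blast
  have fresh: "a \<notin> ?A" "k \<notin> ?A" "k \<notin> ?K"
    using Cons.prems[unfolded p] by simp_all
  define t where "t = (if k \<in> L' \<and> a \<notin> L' - {k} then ann_sign k L' * ann_sign a (L' - {k}) else 0)"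
  have "hops No (p # ps) (ket L) = s *\<^sub>F hop No a k (ket L')"
    by (simp add: p s module_hom.scale[OF module_hom_hop])
  also have "\<dots> = (s * t) *\<^sub>F ket (insert a (L' - {k}))"
    using \<open>L' \<subseteq> {..<No}\<close> by (simp add: hop_on_ket hop_ket_eq_fscale t_def fstate.scale_scale)
  also have "insert a (L' - {k}) = L - insert k ?K \<union> insert a ?A"
    using fresh unfolding L'_def by blast
  finally have "hops No (p # ps) (ket L) = (s * t) *\<^sub>F ket (L - insert k ?K \<union> insert a ?A)" .
  moreover have "t \<noteq> 0 \<longleftrightarrow> k \<in> L' \<and> a \<notin> L' - {k}"
    by (simp add: t_def ann_sign_def)
  then have "s * t \<noteq> 0 \<longleftrightarrow> insert k ?K \<subseteq> L \<and> insert a ?A \<inter> (L - insert k ?K) = {}"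
    unfolding mult_eq_0_iff de_Morgan_disj s(2) using fresh unfolding L'_def by blast
  moreover have "snd ` set (p # ps) = insert k ?K" "fst ` set (p # ps) = insert a ?A"
    by (simp_all add: p)
  ultimately show ?case
    by metis
qed

lemma admissible_hops_map:
  assumes "distinct ks" "inj_on f (set ks)" "f ` set ks \<subseteq> {..<No}"
    and "\<And>k. k \<in> set ks \<Longrightarrow> f k \<in> set ks \<Longrightarrow> f k = k"
  shows "admissible_hops No (map (\<lambda>k. (f k, k)) ks)"
  using assms
proof (induction ks)
  case Nil
  show ?case by simp
next
  case (Cons k ks)
  have "k \<notin> f ` set ks"
  proof
    assume "k \<in> f ` set ks"
    then obtain k' where "k' \<in> set ks" "k = f k'" by blast
    with Cons.prems(1,4) show False by force
  qed
  with Cons show ?case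
    by (auto simp: image_image)
qed

lemma finite_slaters: "finite (slaters Ne No)"
  by (rule finite_subset[of _ "Pow {..<No}"]) (auto simp: slaters_def)

lemma slaters_finite: "K \<in> slaters Ne No \<Longrightarrow> finite K"
  unfolding slaters_def using finite_subset[OF _ finite_lessThan] by blast

lemma admissible_transfer_exists:
  assumes K: "K \<in> slaters Ne No" and A: "A \<in> slaters Ne No"
  obtains ps where "admissible_hops No ps" "length ps = Ne" "snd ` set ps = K" "fst ` set ps = A"
    "\<forall>(a, k)\<in>set ps. a < No \<and> k < No"
proof -
  have KA: "K \<subseteq> {..<No}" "card K = Ne" "A \<subseteq> {..<No}" "card A = Ne"
    using K A by (auto simp: slaters_def)
  have fin: "finite K" "finite A"
    using K A by (simp_all add: slaters_finite)
  have "card (K - A) = card (A - K)"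
    using fin KA by (simp add: card_Diff_subset_Int Int_commute)
  then obtain h where h: "bij_betw h (K - A) (A - K)"
    using fin finite_same_card_bij by blast
  define f where "f k = (if k \<in> A then k else h k)" for k
  have fixed: "bij_betw f (K \<inter> A) (K \<inter> A)"
    by (rule bij_betw_cong[THEN iffD2, OF _ bij_betw_id]) (auto simp: f_def)
  have moved: "bij_betw f (K - A) (A - K)"
    using h by (rule bij_betw_cong[THEN iffD1, rotated]) (auto simp: f_def)
  have "bij_betw f (K \<inter> A \<union> (K - A)) (K \<inter> A \<union> (A - K))"
    by (rule bij_betw_combine[OF fixed moved]) blast
  moreover have "K \<inter> A \<union> (K - A) = K" "K \<inter> A \<union> (A - K) = A"
    by blast+
  ultimately have f: "bij_betw f K A"
    by (simp only:)
  define ks where "ks = sorted_list_of_set K"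
  have ks: "set ks = K" "distinct ks" "length ks = Ne"
    using fin KA by (simp_all add: ks_def)
  define ps where "ps = map (\<lambda>k. (f k, k)) ks"
  have "f k = k" if "k \<in> K" "f k \<in> K" for k
    using that h bij_betwE[OF h] by (auto simp: f_def split: if_splits)
  then have "admissible_hops No ps"
    unfolding ps_def using ks f KA by (intro admissible_hops_map) (auto simp: bij_betw_def)
  moreover have "snd ` set ps = K" "fst ` set ps = A" "length ps = Ne"
    using ks f by (auto simp: ps_def image_image bij_betw_def)
  moreover have "\<forall>(a, k)\<in>set ps. a < No \<and> k < No"
    using \<open>fst ` set ps = A\<close> \<open>snd ` set ps = K\<close> KA by force
  ultimately show ?thesis
    using that by blast
qed

lemma hops_ket_transfer:
  assumes ps: "admissible_hops No ps" "snd ` set ps = K" "fst ` set ps = A"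
    and L: "L \<in> slaters Ne No" and K: "K \<in> slaters Ne No"
  shows "\<exists>s. hops No ps (ket L) = s *\<^sub>F ket A \<and> (s \<noteq> 0 \<longleftrightarrow> L = K)"
proof -
  have "L \<subseteq> {..<No}"
    using L by (simp add: slaters_def)
  from hops_ket[OF ps(1) this] obtain t where t: "hops No ps (ket L) = t *\<^sub>F ket (L - K \<union> A)"
      "t \<noteq> 0 \<longleftrightarrow> K \<subseteq> L \<and> A \<inter> (L - K) = {}"
    unfolding ps(2,3) by (elim exE conjE)
  show ?thesis
  proof (cases "L = K")
    case True
    with t show ?thesis
      by (intro exI[of _ t]) simp
  next
    case False
    have "card K = card L"
      using K L by (simp add: slaters_def)
    then have "\<not> K \<subseteq> L"
      using card_subset_eq[OF slaters_finite[OF L]] False by blast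
    with t have "hops No ps (ket L) = 0"
      by simp
    with False show ?thesis
      by (intro exI[of _ 0]) simp
  qed
qed

lemma Hspace_iff: "v \<in> Hspace Ne No \<longleftrightarrow> (\<forall>K. K \<notin> slaters Ne No \<longrightarrow> v K = 0)"
  by (auto simp: Hspace_def)

lemma subspace_Hspace: "fstate.subspace (Hspace Ne No)"
  by (simp add: fstate.subspace_def Hspace_iff fscale_apply)

lemma Hspace_eq_sum_kets:
  assumes "v \<in> Hspace Ne No"
  shows "v = (\<Sum>L\<in>slaters Ne No. v L *\<^sub>F ket L)"
proof
  fix K
  have "(\<Sum>L\<in>slaters Ne No. v L *\<^sub>F ket L) K = (\<Sum>L\<in>slaters Ne No. if L = K then v K else 0)"
    unfolding sum_fun_apply fscale_apply ket_def by (rule sum.cong) auto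
  also have "\<dots> = v K"
    using assms finite_slaters by (simp add: Hspace_iff)
  finally show "v K = (\<Sum>L\<in>slaters Ne No. v L *\<^sub>F ket L) K" ..
qed

lemma ket_mem_Hspace: "K \<in> slaters Ne No \<Longrightarrow> ket K \<in> Hspace Ne No"
  by (auto simp: Hspace_iff ket_def)

lemma hop_ket_mem_Hspace:
  assumes L: "L \<in> slaters Ne No" and "a < No"
  shows "hop_ket a j L \<in> Hspace Ne No"
proof (cases "j \<in> L \<and> a \<notin> L - {j}")
  case True
  have "finite L"
    using L by (rule slaters_finite)
  with True have "card (insert a (L - {j})) = Suc (card (L - {j}))"
    by (intro card_insert_disjoint) auto
  also have "\<dots> = card L"
    using True \<open>finite L\<close> by (intro card_Suc_Diff1) auto
  finally have "card (insert a (L - {j})) = card L" .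
  with assms have "insert a (L - {j}) \<in> slaters Ne No"
    by (auto simp: slaters_def)
  then show ?thesis
    unfolding hop_ket_eq_fscale by (intro fstate.subspace_scale[OF subspace_Hspace] ket_mem_Hspace)
next
  case False
  then have "hop_ket a j L = 0"
    by (simp only: hop_ket_def if_False zero_fun_def)
  then show ?thesis
    using fstate.subspace_0[OF subspace_Hspace] by simp
qed

lemma hop_mem_Hspace:
  assumes v: "v \<in> Hspace Ne No" and "a < No"
  shows "hop No a j v \<in> Hspace Ne No"
  unfolding hop_eq_sum
proof (rule fstate.subspace_sum[OF subspace_Hspace])
  fix L
  show "v L *\<^sub>F hop_ket a j L \<in> Hspace Ne No"
  proof (cases "v L = 0")
    case True
    then show ?thesis
      using fstate.subspace_0[OF subspace_Hspace] by simp
  next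
    case False
    with v have "L \<in> slaters Ne No"
      by (auto simp: Hspace_iff)
    then show ?thesis
      using \<open>a < No\<close> by (intro fstate.subspace_scale[OF subspace_Hspace] hop_ket_mem_Hspace)
  qed
qed

lemma Lop_mem_Hspace:
  assumes "v \<in> Hspace Ne No"
  shows "Lop No m n v \<in> Hspace Ne No"
  unfolding Lop_eq_sum
proof (rule fstate.subspace_sum[OF subspace_Hspace])
  fix j assume "j \<in> {j. j < No \<and> n \<le> j \<and> j - n + m < No}"
  then have "hop No (j - n + m) j v \<in> Hspace Ne No"
    using assms by (intro hop_mem_Hspace) auto
  then show "complex_of_real (Acoef m n j) *\<^sub>F hop No (j - n + m) j v \<in> Hspace Ne No"
    by (rule fstate.subspace_scale[OF subspace_Hspace])
qed

lemma Lprod_mem_Hspace: "v \<in> Hspace Ne No \<Longrightarrow> Lprod No ms v \<in> Hspace Ne No"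
proof (induction ms)
  case Nil
  then show ?case by simp
next
  case (Cons p ms)
  then show ?case
    by (cases p) (simp add: Lop_mem_Hspace)
qed

lemma ket_mem_span_Lprod:
  assumes \<phi>: "\<phi> \<in> Hspace Ne No" "\<phi> \<noteq> (\<lambda>_. 0)" and A: "A \<in> slaters Ne No"
  shows "ket A \<in> fstate.span {Lprod No ms \<phi> | ms. length ms \<le> Ne}"
proof -
  from \<phi>(2) have "\<exists>K. \<phi> K \<noteq> 0"
    by (simp add: fun_eq_iff)
  then obtain K where "\<phi> K \<noteq> 0" ..
  with \<phi>(1) have K: "K \<in> slaters Ne No"
    unfolding Hspace_iff by blast
  obtain ps where ps: "admissible_hops No ps" "length ps = Ne" "snd ` set ps = K" "fst ` set ps = A"
      "\<forall>(a, k)\<in>set ps. a < No \<and> k < No"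
    by (rule admissible_transfer_exists[OF K A])
  have kets: "\<exists>s. hops No ps (ket L) = s *\<^sub>F ket A \<and> (s \<noteq> 0 \<longleftrightarrow> L = K)"
    if "L \<in> slaters Ne No" for L
    using hops_ket_transfer[OF ps(1,3,4) that K] .
  obtain s where s: "s \<noteq> 0" "hops No ps (ket K) = s *\<^sub>F ket A"
    using kets[OF K] by blast
  have vanish: "hops No ps (ket L) = 0" if "L \<in> slaters Ne No" "L \<noteq> K" for L
    using kets[OF that(1)] that(2) by auto
  from Hspace_eq_sum_kets[OF \<phi>(1)]
  have "hops No ps \<phi> = hops No ps (\<Sum>L\<in>slaters Ne No. \<phi> L *\<^sub>F ket L)"
    by (rule arg_cong)
  also have "\<dots> = (\<Sum>L\<in>slaters Ne No. \<phi> L *\<^sub>F hops No ps (ket L))"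
    by (simp add: module_hom.sum[OF module_hom_hops] module_hom.scale[OF module_hom_hops])
  also have "\<dots> = \<phi> K *\<^sub>F hops No ps (ket K)"
    using vanish by (simp add: sum.remove[OF finite_slaters K])
  finally have "hops No ps \<phi> = (\<phi> K * s) *\<^sub>F ket A"
    by (simp add: s fstate.scale_scale)
  moreover have "inverse (\<phi> K * s) * (\<phi> K * s) = 1"
    using s(1) \<open>\<phi> K \<noteq> 0\<close> by (simp add: field_simps)
  ultimately have ket_A: "ket A = inverse (\<phi> K * s) *\<^sub>F hops No ps \<phi>"
    by (simp only: fstate.scale_scale fstate.scale_one)
  have "{Lprod No ms \<phi> | ms. length ms = length ps} \<subseteq> {Lprod No ms \<phi> | ms. length ms \<le> Ne}"
    using ps(2) by auto
  with hops_mem_span_Lprod[OF ps(5)]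
  have "hops No ps \<phi> \<in> fstate.span {Lprod No ms \<phi> | ms. length ms \<le> Ne}"
    using fstate.span_mono by blast
  then show ?thesis
    unfolding ket_A by (rule fstate.span_scale)
qed

lemma span_Lprod_eq_Hspace:
  assumes "\<phi> \<in> Hspace Ne No" "\<phi> \<noteq> (\<lambda>_. 0)"
  shows "fstate.span {Lprod No ms \<phi> | ms. length ms \<le> Ne} = Hspace Ne No"
proof
  show "fstate.span {Lprod No ms \<phi> | ms. length ms \<le> Ne} \<subseteq> Hspace Ne No"
    using assms(1) by (intro fstate.span_minimal subspace_Hspace) (auto intro: Lprod_mem_Hspace)
  show "Hspace Ne No \<subseteq> fstate.span {Lprod No ms \<phi> | ms. length ms \<le> Ne}"
  proof
    fix v assume "v \<in> Hspace Ne No"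
    then have "v = (\<Sum>L\<in>slaters Ne No. v L *\<^sub>F ket L)"
      by (rule Hspace_eq_sum_kets)
    also have "\<dots> \<in> fstate.span {Lprod No ms \<phi> | ms. length ms \<le> Ne}"
      using assms by (intro fstate.span_sum fstate.span_scale ket_mem_span_Lprod)
    finally show "v \<in> fstate.span {Lprod No ms \<phi> | ms. length ms \<le> Ne}" .
  qed
qed

theorem theorem3:
  fixes No Ne :: nat and \<phi> :: fstate
  assumes "1 \<le> No" and "Ne \<le> No"
    and "\<phi> \<in> Hspace Ne No" and "\<phi> \<noteq> (\<lambda>_. 0)"
  shows "cspan {Lprod No ms \<phi> | ms. length ms \<le> Ne} = Hspace Ne No
    \<and> (\<forall>G \<subseteq> Hspace Ne No. (\<exists>g\<in>G. g \<noteq> (\<lambda>_. 0)) \<longrightarrow>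
         (\<forall>\<psi> \<in> Hspace Ne No. (\<forall>g\<in>G. inner_f Ne No g \<psi> = 0) \<longrightarrow>
            \<psi> \<in> cspan {Lprod No ms g | ms g. g \<in> G \<and> length ms \<le> Ne}))"
proof (intro conjI allI impI ballI)
  show "cspan {Lprod No ms \<phi> | ms. length ms \<le> Ne} = Hspace Ne No"
    unfolding cspan_eq_span using assms(3,4) by (rule span_Lprod_eq_Hspace)
next
  fix G \<psi>
  assume "G \<subseteq> Hspace Ne No" "\<exists>g\<in>G. g \<noteq> (\<lambda>_. 0)" "\<psi> \<in> Hspace Ne No"
  then obtain g where g: "g \<in> G" "g \<noteq> (\<lambda>_. 0)" "g \<in> Hspace Ne No"
    by blast
  with \<open>\<psi> \<in> Hspace Ne No\<close> have "\<psi> \<in> fstate.span {Lprod No ms g | ms. length ms \<le> Ne}"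
    using span_Lprod_eq_Hspace by blast
  also have "\<dots> \<subseteq> fstate.span {Lprod No ms g | ms g. g \<in> G \<and> length ms \<le> Ne}"
    using g(1) by (intro fstate.span_mono) blast
  finally show "\<psi> \<in> cspan {Lprod No ms g | ms g. g \<in> G \<and> length ms \<le> Ne}"
    unfolding cspan_eq_span .
qed

end
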